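(* Suppose the algorithm by which validators cast FFG-votes guarantees, for every validator following it: (1) at most one FFG-vote is sent in any slot; (2) if $\mathcal{T}$ is the target checkpoint of the FFG-vote sent in slot $t$, then $\mathcal{T}.c=t$; (3) if $\mathcal{S}$ and $\mathcal{S}'$ are the source checkpoints of the FFG-votes sent in slots $t$ and $t'$ respectively and $t\le t'$, then $\mathcal{S}\le\mathcal{S}'$. Then honest validators are never slashed, i.e., no validator, as long as it follows the algorithm, ever sends two distinct FFG-votes that together violate $\mathbf{E_1}$ or $\mathbf{E_2}$.
   Context: Time is divided into slots. A checkpoint is a pair $\mathcal{C}=(\chi,c)$ of a chain $\chi$ (whose last block has slot $\chi.p$) and a checkpoint slot $c$. An FFG-vote $\mathcal{C}_1\to\mathcal{C}_2$ has source $\mathcal{C}_1$ and target $\mathcal{C}_2$. Checkpoints are preordered lexicographically: $\mathcal{C}\le\mathcal{C}'$ iff $\mathcal{C}.c<\mathcal{C}'.c$, or $\mathcal{C}.c=\mathcal{C}'.c$ and $\mathcal{C}.\chi.p\le\mathcal{C}'.\chi.p$; $\mathcal{C}<\mathcal{C}'$ means $\mathcal{C}\le\mathcal{C}'$ and not $\mathcal{C}'\le\mathcal{C}$. A validator is slashed (violates a slashing condition) if it has sent two distinct FFG-votes $\mathcal{C}_1\to\mathcal{C}_2$ and $\mathcal{C}_3\to\mathcal{C}_4$ with either $\mathbf{E_1}$: $\mathcal{C}_2.c=\mathcal{C}_4.c$, or $\mathbf{E_2}$: $\mathcal{C}_3<\mathcal{C}_1$ and $\mathcal{C}_2.c<\mathcal{C}_4.c$.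 A validator is honest until it is (possibly) corrupted by the adversary; honest validators follow the algorithm. *)

theory Defs
  imports Main
begin

(* A checkpoint C = (chi, c): a chain chi (of abstract type 'ch) and a checkpoint slot c.
   The slot of the last block of a chain is given by a function p :: 'ch => nat. *)
type_synonym 'ch checkpoint = "'ch \<times> nat"

definition cp_chain :: "'ch checkpoint \<Rightarrow> 'ch" where "cp_chain C = fst C"
definition cp_c :: "'ch checkpoint \<Rightarrow> nat" where "cp_c C = snd C"

type_synonym 'ch ffg_vote = "'ch checkpoint \<times> 'ch checkpoint"

definition vsrc :: "'ch ffg_vote \<Rightarrow> 'ch checkpoint" where "vsrc v = fst v"
definition vtgt :: "'ch ffg_vote \<Rightarrow> 'ch checkpoint" where "vtgt v = snd v"

definition cp_le :: "('ch \<Rightarrow> nat) \<Rightarrow> 'ch checkpoint \<Rightarrow> 'ch checkpoint \<Rightarrow> bool" where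
  "cp_le p C C' \<longleftrightarrow> cp_c C < cp_c C' \<or> (cp_c C = cp_c C' \<and> p (cp_chain C) \<le> p (cp_chain C'))"

definition cp_lt :: "('ch \<Rightarrow> nat) \<Rightarrow> 'ch checkpoint \<Rightarrow> 'ch checkpoint \<Rightarrow> bool" where
  "cp_lt p C C' \<longleftrightarrow> cp_le p C C' \<and> \<not> cp_le p C' C"

definition E1 :: "'ch ffg_vote \<Rightarrow> 'ch ffg_vote \<Rightarrow> bool" where
  "E1 v1 v2 \<longleftrightarrow> cp_c (vtgt v1) = cp_c (vtgt v2)"

definition E2 :: "('ch \<Rightarrow> nat) \<Rightarrow> 'ch ffg_vote \<Rightarrow> 'ch ffg_vote \<Rightarrow> bool" where
  "E2 p v1 v2 \<longleftrightarrow> cp_lt p (vsrc v2) (vsrc v1) \<and> cp_c (vtgt v1) < cp_c (vtgt v2)"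

(* a validator that has sent the set of (slot, vote) pairs V is slashed *)
definition slashed :: "('ch \<Rightarrow> nat) \<Rightarrow> (nat \<times> 'ch ffg_vote) set \<Rightarrow> bool" where
  "slashed p V \<longleftrightarrow> (\<exists>t1 v1 t2 v2. (t1, v1) \<in> V \<and> (t2, v2) \<in> V \<and> v1 \<noteq> v2 \<and>
                      (E1 v1 v2 \<or> E2 p v1 v2))"

end

theory Submission
  imports Defs
begin

lemma E1_imp_same_slot:
  assumes "E1 v1 v2"
    and "\<And>t v. (t, v) \<in> V \<Longrightarrow> cp_c (vtgt v) = t"
    and "(t1, v1) \<in> V" "(t2, v2) \<in> V"
  shows "t1 = t2"
  using assms unfolding E1_def by metis

lemma E2_imp_earlier_slot:
  assumes "E2 p v1 v2"
    and "\<And>t v. (t, v) \<in> V \<Longrightarrow> cp_c (vtgt v) = t"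
    and "(t1, v1) \<in> V" "(t2, v2) \<in> V"
  shows "t1 < t2"
  using assms unfolding E2_def by metis

lemma cp_le_imp_not_cp_lt_converse:
  "cp_le p C C' \<Longrightarrow> \<not> cp_lt p C' C"
  unfolding cp_lt_def by simp

lemma cp_le_sources_imp_not_E2:
  "cp_le p (vsrc v1) (vsrc v2) \<Longrightarrow> \<not> E2 p v1 v2"
  unfolding E2_def using cp_le_imp_not_cp_lt_converse by blast

theorem lemma4p3:
  fixes p :: "'ch \<Rightarrow> nat"
    and V :: "(nat \<times> 'ch ffg_vote) set"
  assumes one_per_slot: "\<And>t v v'. (t, v) \<in> V \<Longrightarrow> (t, v') \<in> V \<Longrightarrow> v = v'"
    and target_slot: "\<And>t v. (t, v) \<in> V \<Longrightarrow> cp_c (vtgt v) = t"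
    and source_mono: "\<And>t v t' v'. (t, v) \<in> V \<Longrightarrow> (t', v') \<in> V \<Longrightarrow> t \<le> t' \<Longrightarrow>
                         cp_le p (vsrc v) (vsrc v')"
  shows "\<not> slashed p V"
proof
  assume "slashed p V"
  then obtain t1 v1 t2 v2 where votes: "(t1, v1) \<in> V" "(t2, v2) \<in> V" and "v1 \<noteq> v2"
    and "E1 v1 v2 \<or> E2 p v1 v2"
    unfolding slashed_def by blast
  then consider "E1 v1 v2" | "E2 p v1 v2" by blast
  then show False
  proof cases
    case 1
    then have "t1 = t2" using E1_imp_same_slot target_slot votes by blast
    then show False using one_per_slot votes \<open>v1 \<noteq> v2\<close> by blast
  next
    case 2
    then have "t1 < t2" using E2_imp_earlier_slot target_slot votes by blast
    then have "cp_le p (vsrc v1) (vsrc v2)" using source_mono votes by simp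
    then show False using cp_le_sources_imp_not_E2 \<open>E2 p v1 v2\<close> by blast
  qed
qed

end
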